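(* A CRN protocol $\Pi=(\mathcal{S},\mathcal{R})$ is stably (resp. haltingly) correct with respect to an interface $\mathcal{I}=(\mathcal{U},\mu,\mathcal{C})$ under a weakly fair scheduler if and only if for every valid initial configuration $\mathbf{c}^0$, every strongly connected component $S$ of $D^{\Pi}_{\mathbf{c}^0}$ satisfies at least one of: (1) some reaction of $\mathcal{R}$ escapes from $S$; or (2) $S\subseteq\mathrm{stab}(Z_{\mathcal{I}}(\mathbf{c}^0))$ (resp. $S\subseteq\mathrm{halt}(Z_{\mathcal{I}}(\mathbf{c}^0))$), where $Z_{\mathcal{I}}(\mathbf{c}^0)=\{\mathbf{c}\in\mathbb{N}^{\mathcal{S}}:(\mu(\mathbf{c}^0),\mu(\mathbf{c}))\in\mathcal{C}\}$.
   Context: CRN protocol $\Pi=(\mathcal{S},\mathcal{R})$: $\mathcal{S}$ finite set of species, $\mathcal{R}\subset\mathbb{N}^{\mathcal{S}}\times\mathbb{N}^{\mathcal{S}}$ finite set of reactions $(\mathbf{r},\mathbf{p})$ with $\|\mathbf{r}\|_1\in\{1,2\}$, $\|\mathbf{r}\|_1\le\|\mathbf{p}\|_1$, every $\mathbf{r}$ with $1\le\|\mathbf{r}\|_1\le2$ is the reactant vector of at least one reaction, void reactions are those with $\mathbf{r}=\mathbf{p}$ (and a void reaction is then the only reaction with reactants $\mathbf{r}$). Configurations are $\mathbf{c}\in\mathbb{N}^{\mathcal{S}}$ with $\|\mathbf{c}\|_1\ge1$; $(\mathbf{r},\mathbf{p})$ is applicable to $\mathbf{c}$ if $\mathbf{r}\le\mathbf{c}$,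 giving $\alpha(\mathbf{c})=\mathbf{c}-\mathbf{r}+\mathbf{p}$; $\operatorname{app}(\mathbf{c})$ is the set of applicable reactions; $\mathbf{c}\stackrel{*}{\rightharpoonup}\mathbf{c}'$ means $\mathbf{c}'$ is reachable by a finite sequence of applicable reactions. The protocol respects finite density ($\mathbf{c}\stackrel{*}{\rightharpoonup}\mathbf{c}'$ implies $\|\mathbf{c}'\|_1\le O(\|\mathbf{c}\|_1)$). For $Z\subseteq\mathbb{N}^{\mathcal{S}}$: $\mathrm{stab}(Z)=\{\mathbf{c}\in Z:\mathbf{c}\stackrel{*}{\rightharpoonup}\mathbf{c}'\Rightarrow\mathbf{c}'\in Z\}$, $\mathrm{halt}(Z)=\{\mathbf{c}\in Z:\mathbf{c}\stackrel{*}{\rightharpoonup}\mathbf{c}'\Rightarrow\mathbf{c}'=\mathbf{c}\}$. The configuration digraph $D^{\Pi}$ has an $\alpha$-labeled edge $\mathbf{c}\to\alpha(\mathbf{c})$ for each $\alpha\in\operatorname{app}(\mathbf{c})$; $D^{\Pi}_{\mathbf{c}}$ is its subgraph induced on configurations reachable from $\mathbf{c}$. A reaction $\alpha$ escapes from a component $S$ if $\alpha\in\operatorname{app}(\mathbf{c})$ and $\alpha(\mathbf{c})\notin S$ for all $\mathbf{c}\in S$. An execution is $\langle\mathbf{c}^t,\alpha^t\rangle_{t\ge0}$ with $\alpha^t\in\operatorname{app}(\mathbf{c}^t)$, $\mathbf{c}^{t+1}=\alpha^t(\mathbf{c}^t)$; it is weakly fair if for every $t$ and $\alpha\in\operatorname{app}(\mathbf{c}^t)$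 there is $t'\ge t$ with $\alpha^{t'}=\alpha$ or $\alpha\notin\operatorname{app}(\mathbf{c}^{t'})$; it stabilizes (resp. halts) into $Z$ if $\mathbf{c}^t\in\mathrm{stab}(Z)$ (resp. $\mathrm{halt}(Z)$) for some $t$. An interface $\mathcal{I}=(\mathcal{U},\mu,\mathcal{C})$ consists of a set $\mathcal{U}$, a map $\mu:\mathcal{S}\to\mathcal{U}$ and a relation $\mathcal{C}\subseteq\mathbb{N}^{\mathcal{U}}\times\mathbb{N}^{\mathcal{U}}$, with $\mu(\mathbf{c})(u)=\sum_{A:\mu(A)=u}\mathbf{c}(A)$. A configuration $\mathbf{c}^0$ is a valid initial configuration if $Z_{\mathcal{I}}(\mathbf{c}^0)\neq\emptyset$. $\Pi$ is stably (resp. haltingly) correct w.r.t. $\mathcal{I}$ under a weakly fair scheduler if every weakly fair execution from a valid initial configuration $\mathbf{c}^0$ stabilizes (resp. halts) into $Z_{\mathcal{I}}(\mathbf{c}^0)$. *)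

theory Defs
  imports Main
begin

type_synonym 's cfg = "'s \<Rightarrow> nat"
type_synonym 's reaction = "'s cfg \<times> 's cfg"

definition norm1 :: "('s::finite) cfg \<Rightarrow> nat" where
  "norm1 c = (\<Sum>s\<in>UNIV. c s)"

definition crn_protocol :: "('s::finite) reaction set \<Rightarrow> bool" where
  "crn_protocol R \<longleftrightarrow>
     finite R \<and>
     (\<forall>(r,p)\<in>R. (norm1 r = 1 \<or> norm1 r = 2) \<and> norm1 r \<le> norm1 p) \<and>
     (\<forall>r. (norm1 r = 1 \<or> norm1 r = 2) \<longrightarrow> (\<exists>p. (r,p) \<in> R)) \<and>
     (\<forall>(r,p)\<in>R. r = p \<longrightarrow> (\<forall>q. (r,q) \<in> R \<longrightarrow> q = r))"

definition applicable :: "'s reaction \<Rightarrow> 's cfg \<Rightarrow> bool" where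
  "applicable \<alpha> c \<longleftrightarrow> (\<forall>s. fst \<alpha> s \<le> c s)"

definition apply_rxn :: "'s reaction \<Rightarrow> 's cfg \<Rightarrow> 's cfg" where
  "apply_rxn \<alpha> c = (\<lambda>s. c s - fst \<alpha> s + snd \<alpha> s)"

definition app :: "'s reaction set \<Rightarrow> 's cfg \<Rightarrow> 's reaction set" where
  "app R c = {\<alpha> \<in> R. applicable \<alpha> c}"

definition step :: "'s reaction set \<Rightarrow> 's cfg \<Rightarrow> 's cfg \<Rightarrow> bool" where
  "step R c c' \<longleftrightarrow> (\<exists>\<alpha>\<in>app R c. c' = apply_rxn \<alpha> c)"

definition reach :: "'s reaction set \<Rightarrow> 's cfg \<Rightarrow> 's cfg \<Rightarrow> bool" where
  "reach R = (step R)\<^sup>*\<^sup>*"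

definition finite_density :: "('s::finite) reaction set \<Rightarrow> bool" where
  "finite_density R \<longleftrightarrow> (\<exists>K::nat. \<forall>c c'. reach R c c' \<longrightarrow> norm1 c' \<le> K * norm1 c)"

definition stab :: "'s reaction set \<Rightarrow> 's cfg set \<Rightarrow> 's cfg set" where
  "stab R Z = {c \<in> Z. \<forall>c'. reach R c c' \<longrightarrow> c' \<in> Z}"

definition halt :: "'s reaction set \<Rightarrow> 's cfg set \<Rightarrow> 's cfg set" where
  "halt R Z = {c \<in> Z. \<forall>c'. reach R c c' \<longrightarrow> c' = c}"

definition is_scc :: "'s reaction set \<Rightarrow> 's cfg \<Rightarrow> 's cfg set \<Rightarrow> bool" where
  "is_scc R c0 S \<longleftrightarrow>
     S \<noteq> {} \<and> (\<forall>c\<in>S. reach R c0 c) \<and>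
     (\<forall>c\<in>S. \<forall>c'\<in>S. reach R c c') \<and>
     (\<forall>c\<in>S. \<forall>c'. reach R c0 c' \<and> reach R c c' \<and> reach R c' c \<longrightarrow> c' \<in> S)"

definition escapes :: "'s reaction \<Rightarrow> 's cfg set \<Rightarrow> bool" where
  "escapes \<alpha> S \<longleftrightarrow> (\<forall>c\<in>S. applicable \<alpha> c \<and> apply_rxn \<alpha> c \<notin> S)"

text \<open>Interface (U, mu, C): U is the type 'u.\<close>
definition mu_cfg :: "('s::finite \<Rightarrow> 'u) \<Rightarrow> 's cfg \<Rightarrow> ('u \<Rightarrow> nat)" where
  "mu_cfg \<mu> c = (\<lambda>u. \<Sum>A\<in>{A. \<mu> A = u}. c A)"

definition Zset :: "('s::finite \<Rightarrow> 'u) \<Rightarrow> (('u \<Rightarrow> nat) \<times> ('u \<Rightarrow> nat)) set \<Rightarrow> 's cfg \<Rightarrow> 's cfg set" where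
  "Zset \<mu> C c0 = {c. (mu_cfg \<mu> c0, mu_cfg \<mu> c) \<in> C}"

definition valid_init :: "('s::finite \<Rightarrow> 'u) \<Rightarrow> (('u \<Rightarrow> nat) \<times> ('u \<Rightarrow> nat)) set \<Rightarrow> 's cfg \<Rightarrow> bool" where
  "valid_init \<mu> C c0 \<longleftrightarrow> norm1 c0 \<ge> 1 \<and> Zset \<mu> C c0 \<noteq> {}"

definition is_execution :: "'s reaction set \<Rightarrow> (nat \<Rightarrow> 's cfg) \<Rightarrow> (nat \<Rightarrow> 's reaction) \<Rightarrow> bool" where
  "is_execution R c a \<longleftrightarrow> (\<forall>t. a t \<in> app R (c t) \<and> c (Suc t) = apply_rxn (a t) (c t))"

definition weakly_fair :: "'s reaction set \<Rightarrow> (nat \<Rightarrow> 's cfg) \<Rightarrow> (nat \<Rightarrow> 's reaction) \<Rightarrow> bool" where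
  "weakly_fair R c a \<longleftrightarrow>
     (\<forall>t. \<forall>\<alpha>\<in>app R (c t). \<exists>t'\<ge>t. a t' = \<alpha> \<or> \<alpha> \<notin> app R (c t'))"

definition stably_correct :: "('s::finite) reaction set \<Rightarrow> ('s \<Rightarrow> 'u) \<Rightarrow> (('u \<Rightarrow> nat) \<times> ('u \<Rightarrow> nat)) set \<Rightarrow> bool" where
  "stably_correct R \<mu> C \<longleftrightarrow>
     (\<forall>c a. is_execution R c a \<and> weakly_fair R c a \<and> valid_init \<mu> C (c 0) \<longrightarrow>
        (\<exists>t. c t \<in> stab R (Zset \<mu> C (c 0))))"

definition haltingly_correct :: "('s::finite) reaction set \<Rightarrow> ('s \<Rightarrow> 'u) \<Rightarrow> (('u \<Rightarrow> nat) \<times> ('u \<Rightarrow> nat)) set \<Rightarrow> bool" where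
  "haltingly_correct R \<mu> C \<longleftrightarrow>
     (\<forall>c a. is_execution R c a \<and> weakly_fair R c a \<and> valid_init \<mu> C (c 0) \<longrightarrow>
        (\<exists>t. c t \<in> halt R (Zset \<mu> C (c 0))))"

end

(*
  Both notions of correctness ask that every weakly fair execution from c0 eventually enters a set
  P (stab Z or halt Z) that is closed under reachability; the criterion works for any such P.

  If every fair execution enters P: given a strongly connected component S from which no reaction
  escapes, pick for each reaction a configuration of S at which it is disabled or leads back into
  S. Walking along shortest paths from one such waypoint to the next, taking the reactions in
  cyclic order, gives a weakly fair execution from c0 that can always return to S; once it is in
  P, closure puts all of S into P.

  Conversely, finite density bounds a fair execution, so it takes finitely many values and from
  some time on only visits configurations that recur infinitely often. These lie in a single
  strongly connected component, from which weak fairness lets no reaction escape; hence that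
  component lies in P, and the execution has entered P.
*)
theory Submission
  imports Defs "HOL-Library.Infinite_Set"
begin

lemma reach_refl [simp]: "reach R x x"
  unfolding reach_def by simp

lemma reach_trans: "reach R x y \<Longrightarrow> reach R y z \<Longrightarrow> reach R x z"
  unfolding reach_def by simp

lemma reach_apply_rxn: "\<beta> \<in> app R x \<Longrightarrow> reach R x (apply_rxn \<beta> x)"
  unfolding reach_def step_def by auto

lemma execution_reach:
  assumes "is_execution R c a" and "t \<le> t'"
  shows "reach R (c t) (c t')"
  using assms(2)
proof (induction t' rule: dec_induct)
  case (step t')
  have "reach R (c t') (c (Suc t'))"
    using assms(1) reach_apply_rxn unfolding is_execution_def by metis
  with step.IH show ?case by (rule reach_trans)
qed simp

subsection \<open>Size of configurations\<close>

lemma norm1_apply_rxn: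
  assumes "applicable \<alpha> c"
  shows "norm1 (apply_rxn \<alpha> c) + norm1 (fst \<alpha>) = norm1 c + norm1 (snd \<alpha>)"
proof -
  have "apply_rxn \<alpha> c s + fst \<alpha> s = c s + snd \<alpha> s" for s
    using assms unfolding applicable_def apply_rxn_def by (simp add: trans_le_add1)
  then show ?thesis
    unfolding norm1_def by (simp add: sum.distrib[symmetric])
qed

lemma norm1_reach_mono:
  assumes "crn_protocol R" and "reach R x y"
  shows "norm1 x \<le> norm1 y"
  using assms(2) unfolding reach_def
proof (induction rule: rtranclp_induct)
  case (step y z)
  then obtain \<alpha> where \<alpha>: "\<alpha> \<in> R" "applicable \<alpha> y" "z = apply_rxn \<alpha> y"
    unfolding step_def app_def by auto
  have "norm1 (fst \<alpha>) \<le> norm1 (snd \<alpha>)"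
    using assms(1) \<alpha>(1) unfolding crn_protocol_def by (cases \<alpha>) auto
  with norm1_apply_rxn[OF \<alpha>(2)] \<alpha>(3) step.IH show ?case by simp
qed simp

lemma app_nonempty:
  assumes "crn_protocol R" and "norm1 x \<ge> 1"
  shows "app R x \<noteq> {}"
proof -
  obtain s where s: "x s \<ge> 1"
    using assms(2) unfolding norm1_def by (metis less_one not_le sum.neutral)
  define r where "r = (\<lambda>t. if t = s then 1 else (0::nat))"
  have "norm1 r = 1"
    unfolding norm1_def r_def by simp
  then obtain p where "(r, p) \<in> R"
    using assms(1) unfolding crn_protocol_def by blast
  moreover have "applicable (r, p) x"
    unfolding applicable_def r_def using s by auto
  ultimately show ?thesis
    unfolding app_def by auto
qed

lemma finite_bounded_cfgs: "finite {c :: ('s::finite) cfg. \<forall>s. c s \<le> B}"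
proof -
  have "finite {f :: 's cfg. \<forall>x. (x \<in> UNIV \<longrightarrow> f x \<in> {0..B}) \<and> (x \<notin> UNIV \<longrightarrow> f x = 0)}"
    by (rule finite_set_of_finite_funs) auto
  then show ?thesis by simp
qed

lemma finite_range_execution:
  assumes "finite_density R" and "is_execution R c a"
  shows "finite (range c)"
proof -
  obtain K where K: "\<And>x y. reach R x y \<Longrightarrow> norm1 y \<le> K * norm1 x"
    using assms(1) unfolding finite_density_def by blast
  have "c t s \<le> K * norm1 (c 0)" for t s
  proof -
    have "c t s \<le> norm1 (c t)"
      unfolding norm1_def by (rule member_le_sum) auto
    also have "\<dots> \<le> K * norm1 (c 0)"
      using K execution_reach[OF assms(2)] by blast
    finally show ?thesis .
  qed
  then show ?thesis
    using finite_subset[OF _ finite_bounded_cfgs] by blast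
qed

subsection \<open>Recurrent configurations of fair executions\<close>

lemma finite_range_eventually_recurrent:
  fixes f :: "nat \<Rightarrow> 'a"
  assumes "finite (range f)"
  shows "\<exists>T. \<forall>t\<ge>T. infinite {t'. f t' = f t}"
proof -
  define J where "J = {y \<in> range f. finite (f -` {y})}"
  have "finite {t. f t \<in> J}"
  proof -
    have "{t. f t \<in> J} = (\<Union>y\<in>J. f -` {y})" by blast
    moreover have "finite J" using assms unfolding J_def by simp
    ultimately show ?thesis unfolding J_def by auto
  qed
  then obtain n where "\<And>t. f t \<in> J \<Longrightarrow> t \<le> n"
    unfolding finite_nat_set_iff_bounded_le by auto
  then have "infinite {t'. f t' = f t}" if "t \<ge> Suc n" for t
    using that unfolding J_def vimage_def by fastforce
  then show ?thesis by blast
qed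

lemma is_scc_mutual_reach:
  assumes "reach R c0 y"
  shows "is_scc R c0 {z. reach R y z \<and> reach R z y}"
  unfolding is_scc_def
proof (intro conjI ballI allI impI)
  fix z z' assume "z \<in> {z. reach R y z \<and> reach R z y}" "z' \<in> {z. reach R y z \<and> reach R z y}"
  then show "reach R c0 z" "reach R z z'"
    using assms reach_trans by blast+
next
  fix z z' assume "z \<in> {z. reach R y z \<and> reach R z y}" "reach R c0 z' \<and> reach R z z' \<and> reach R z' z"
  then show "z' \<in> {z. reach R y z \<and> reach R z y}"
    using reach_trans by blast
qed (use reach_refl in blast)

lemma weakly_fair_trapped_not_escapes:
  assumes "is_execution R c a" and "weakly_fair R c a"
    and trapped: "\<And>t. t \<ge> T \<Longrightarrow> c t \<in> S" and "\<alpha> \<in> R"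
  shows "\<not> escapes \<alpha> S"
proof
  assume esc: "escapes \<alpha> S"
  then have "\<alpha> \<in> app R (c t)" if "t \<ge> T" for t
    using \<open>\<alpha> \<in> R\<close> trapped[OF that] unfolding escapes_def app_def by blast
  then obtain t where "t \<ge> T" and "a t = \<alpha>"
    using assms(2) unfolding weakly_fair_def by (meson order.refl order.trans)
  then have "c (Suc t) = apply_rxn \<alpha> (c t)"
    using assms(1) unfolding is_execution_def by simp
  then show False
    using esc trapped \<open>t \<ge> T\<close> unfolding escapes_def by (metis le_SucI)
qed

lemma weakly_fair_execution_enters:
  assumes "finite_density R" and exec: "is_execution R c a" and "weakly_fair R c a"
    and scc_cond: "\<And>S. is_scc R (c 0) S \<Longrightarrow> (\<exists>\<alpha>\<in>R. escapes \<alpha> S) \<or> S \<subseteq> P"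
  shows "\<exists>t. c t \<in> P"
proof -
  obtain T where recurrent: "\<And>t. t \<ge> T \<Longrightarrow> infinite {t'. c t' = c t}"
    using finite_range_eventually_recurrent[OF finite_range_execution[OF assms(1,2)]] by blast
  define S where "S = {z. reach R (c T) z \<and> reach R z (c T)}"
  have trapped: "c t \<in> S" if "t \<ge> T" for t
  proof -
    obtain t' where "t' \<ge> t" "c t' = c T"
      using recurrent[OF order.refl] unfolding infinite_nat_iff_unbounded_le by auto
    then have "reach R (c t) (c T)"
      using execution_reach[OF exec] by metis
    moreover have "reach R (c T) (c t)"
      using execution_reach[OF exec that] .
    ultimately show ?thesis
      unfolding S_def by simp
  qed
  have "is_scc R (c 0) S"
    unfolding S_def by (rule is_scc_mutual_reach[OF execution_reach[OF exec]]) simp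
  moreover have "\<not> (\<exists>\<alpha>\<in>R. escapes \<alpha> S)"
    using weakly_fair_trapped_not_escapes[OF exec assms(3) trapped] by blast
  ultimately have "S \<subseteq> P"
    using scc_cond by blast
  then show ?thesis
    using trapped[OF order.refl] by blast
qed

subsection \<open>Fair executions that stay close to a strongly connected component\<close>

definition step_dist :: "'s reaction set \<Rightarrow> 's cfg \<Rightarrow> 's cfg \<Rightarrow> nat" where
  "step_dist R x y = (LEAST n. (step R ^^ n) x y)"

lemma reach_step_closer:
  assumes "reach R x y" and "x \<noteq> y"
  shows "\<exists>\<beta>\<in>app R x. reach R (apply_rxn \<beta> x) y \<and> step_dist R (apply_rxn \<beta> x) y < step_dist R x y"
proof -
  have "\<exists>n. (step R ^^ n) x y"
    using assms(1) unfolding reach_def rtranclp_power .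
  then have shortest: "(step R ^^ step_dist R x y) x y"
    unfolding step_dist_def by (rule LeastI_ex)
  then obtain m where m: "step_dist R x y = Suc m"
    using assms(2) by (cases "step_dist R x y") auto
  then obtain z where "step R x z" and z: "(step R ^^ m) z y"
    using shortest relpowp_Suc_D2 by metis
  moreover have "reach R z y"
    using z unfolding reach_def rtranclp_power by blast
  moreover have "step_dist R z y \<le> m"
    unfolding step_dist_def using z by (rule Least_le)
  ultimately show ?thesis
    unfolding step_def m by auto
qed

definition greedy_rxn :: "'s reaction set \<Rightarrow> 's cfg \<Rightarrow> 's cfg \<Rightarrow> 's reaction" where
  "greedy_rxn R y x =
     (SOME \<beta>. \<beta> \<in> app R x \<and> reach R (apply_rxn \<beta> x) y \<and> step_dist R (apply_rxn \<beta> x) y < step_dist R x y)"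

lemma greedy_rxn_closer:
  assumes "reach R x y" and "x \<noteq> y"
  shows "greedy_rxn R y x \<in> app R x" and "reach R (apply_rxn (greedy_rxn R y x) x) y"
    and "step_dist R (apply_rxn (greedy_rxn R y x) x) y < step_dist R x y"
  using someI_ex[OF reach_step_closer[OF assms, unfolded Bex_def]]
  unfolding greedy_rxn_def by auto

text \<open>The state of the pursuit is the current configuration together with the index n of the
  waypoint w n it is heading for.\<close>

context
  fixes R :: "'s reaction set" and w :: "nat \<Rightarrow> 's cfg" and d :: "nat \<Rightarrow> 's reaction"
    and x0 :: "'s cfg"
  assumes reach_first_waypoint: "reach R x0 (w 0)"
    and waypoint_exit: "\<And>n. d n \<in> app R (w n)"
    and reach_next_waypoint: "\<And>n. reach R (apply_rxn (d n) (w n)) (w (Suc n))"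
begin

definition pursuit_rxn :: "'s cfg \<times> nat \<Rightarrow> 's reaction" where
  "pursuit_rxn = (\<lambda>(x, n). if x = w n then d n else greedy_rxn R (w n) x)"

definition pursuit :: "nat \<Rightarrow> 's cfg \<times> nat" where
  "pursuit t = ((\<lambda>(x, n). (apply_rxn (pursuit_rxn (x, n)) x, if x = w n then Suc n else n)) ^^ t) (x0, 0)"

lemma pursuit_0: "pursuit 0 = (x0, 0)"
  unfolding pursuit_def by simp

lemma pursuit_Suc:
  "pursuit t = (x, n) \<Longrightarrow>
     pursuit (Suc t) = (apply_rxn (pursuit_rxn (x, n)) x, if x = w n then Suc n else n)"
  unfolding pursuit_def by simp

lemma pursuit_on_track: "pursuit t = (x, n) \<Longrightarrow> reach R x (w n)"
proof (induction t arbitrary: x n)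
  case 0
  then show ?case
    using reach_first_waypoint pursuit_0 by simp
next
  case (Suc t)
  obtain x' n' where prev: "pursuit t = (x', n')" by fastforce
  show ?case
  proof (cases "x' = w n'")
    case True
    then show ?thesis
      using Suc.prems pursuit_Suc[OF prev] reach_next_waypoint unfolding pursuit_rxn_def by auto
  next
    case False
    then show ?thesis
      using Suc.prems pursuit_Suc[OF prev] greedy_rxn_closer(2)[OF Suc.IH[OF prev]]
      unfolding pursuit_rxn_def by auto
  qed
qed

lemma pursuit_arrives: "pursuit t = (x, n) \<Longrightarrow> \<exists>t'\<ge>t. pursuit t' = (w n, n)"
proof (induction "step_dist R x (w n)" arbitrary: t x rule: less_induct)
  case less
  show ?case
  proof (cases "x = w n")
    case False
    note greedy = greedy_rxn_closer[OF pursuit_on_track[OF less.prems] False]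
    have "pursuit (Suc t) = (apply_rxn (greedy_rxn R (w n) x) x, n)"
      using pursuit_Suc[OF less.prems] False unfolding pursuit_rxn_def by simp
    from less.hyps[OF greedy(3) this] show ?thesis
      by (meson Suc_leD)
  qed (use less.prems in auto)
qed

lemma execution_through_waypoints:
  obtains c a \<tau> where "is_execution R c a" and "c 0 = x0" and "strict_mono \<tau>"
    and "\<And>n. c (\<tau> n) = w n" and "\<And>n. a (\<tau> n) = d n"
proof -
  define c where "c t = fst (pursuit t)" for t
  define a where "a t = pursuit_rxn (pursuit t)" for t
  have "is_execution R c a"
    unfolding is_execution_def
  proof
    fix t
    obtain x n where st: "pursuit t = (x, n)" by fastforce
    show "a t \<in> app R (c t) \<and> c (Suc t) = apply_rxn (a t) (c t)"
      using pursuit_Suc[OF st] waypoint_exit greedy_rxn_closer(1)[OF pursuit_on_track[OF st]]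
      unfolding a_def c_def st pursuit_rxn_def by auto
  qed
  moreover have "c 0 = x0"
    unfolding c_def pursuit_0 by simp
  moreover obtain \<tau> where "\<And>n. pursuit (\<tau> n) = (w n, n) \<and> \<tau> n < \<tau> (Suc n)"
  proof -
    have "\<exists>t. pursuit t = (w 0, 0)"
      using pursuit_arrives[OF pursuit_0] by blast
    moreover have "\<exists>t'. pursuit t' = (w (Suc n), Suc n) \<and> t < t'" if "pursuit t = (w n, n)" for t n
      using pursuit_arrives[OF pursuit_Suc[OF that, simplified]] by (metis Suc_le_lessD)
    ultimately have "\<exists>\<tau>. \<forall>n. pursuit (\<tau> n) = (w n, n) \<and> \<tau> n < \<tau> (Suc n)"
      by (intro dependent_nat_choice) auto
    with that show thesis by blast
  qed
  ultimately show thesis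
    using that[of c a \<tau>] unfolding c_def a_def strict_mono_Suc_iff by (simp add: pursuit_rxn_def)
qed

end

lemma cyclic_enumeration:
  assumes "finite A" and "A \<noteq> {}"
  obtains e :: "nat \<Rightarrow> 'a" where "range e \<subseteq> A" and "\<forall>x\<in>A. \<forall>N. \<exists>n\<ge>N. e n = x"
proof -
  obtain xs where xs: "set xs = A"
    using finite_list[OF assms(1)] by blast
  define L where "L = length xs"
  have "L > 0"
    using xs assms(2) unfolding L_def by auto
  define e where "e n = xs ! (n mod L)" for n
  have "range e \<subseteq> A"
    using xs \<open>L > 0\<close> unfolding e_def L_def by auto
  moreover have "\<forall>x\<in>A. \<forall>N. \<exists>n\<ge>N. e n = x"
  proof (intro ballI allI)
    fix x N assume "x \<in> A"
    then obtain i where "i < L" "xs ! i = x"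
      unfolding xs[symmetric] L_def in_set_conv_nth by blast
    moreover have "N * L + i \<ge> N"
      using \<open>L > 0\<close> by (simp add: trans_le_add1)
    ultimately show "\<exists>n\<ge>N. e n = x"
      unfolding e_def by (intro exI[of _ "N * L + i"]) simp
  qed
  ultimately show thesis
    by (rule that)
qed

lemma is_scc_between:
  assumes "is_scc R c0 S" and "x \<in> S" and "y \<in> S" and "reach R x z" and "reach R z y"
  shows "z \<in> S"
  using assms reach_trans unfolding is_scc_def by meson

lemma is_scc_step_within:
  assumes "crn_protocol R" and "norm1 c0 \<ge> 1" and scc: "is_scc R c0 S"
    and no_escape: "\<not> (\<exists>\<alpha>\<in>R. escapes \<alpha> S)" and "x \<in> S"
  shows "\<exists>\<beta>\<in>app R x. apply_rxn \<beta> x \<in> S"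
proof (cases "S = {x}")
  case True
  have "norm1 x \<ge> 1"
    using norm1_reach_mono[OF assms(1)] scc \<open>x \<in> S\<close> assms(2) unfolding is_scc_def
    by (meson order.trans)
  then obtain \<beta> where \<beta>: "\<beta> \<in> app R x"
    using app_nonempty[OF assms(1)] by blast
  then have "\<not> escapes \<beta> S"
    using no_escape unfolding app_def by blast
  with \<beta> True have "apply_rxn \<beta> x \<in> S"
    unfolding app_def escapes_def by auto
  with \<beta> show ?thesis ..
next
  case False
  then obtain y where "y \<in> S" "y \<noteq> x"
    using \<open>x \<in> S\<close> by blast
  then have "(step R)\<^sup>*\<^sup>* x y"
    using scc \<open>x \<in> S\<close> unfolding is_scc_def reach_def by blast
  then obtain z where "step R x z" and "reach R z y"
    using \<open>y \<noteq> x\<close> unfolding reach_def by (metis converse_rtranclpE)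
  moreover have "z \<in> S"
    using is_scc_between[OF scc \<open>x \<in> S\<close> \<open>y \<in> S\<close>] \<open>step R x z\<close> \<open>reach R z y\<close>
    unfolding reach_def by blast
  ultimately show ?thesis
    unfolding step_def by blast
qed

lemma is_scc_fire_or_disabled:
  assumes "crn_protocol R" and "norm1 c0 \<ge> 1" and scc: "is_scc R c0 S"
    and no_escape: "\<not> (\<exists>\<alpha>\<in>R. escapes \<alpha> S)" and "\<alpha> \<in> R"
  shows "\<exists>y\<in>S. \<exists>\<beta>\<in>app R y. apply_rxn \<beta> y \<in> S \<and> (\<beta> = \<alpha> \<or> \<not> applicable \<alpha> y)"
proof -
  obtain y where "y \<in> S" and y: "\<not> applicable \<alpha> y \<or> apply_rxn \<alpha> y \<in> S"
    using no_escape \<open>\<alpha> \<in> R\<close> unfolding escapes_def by blast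
  show ?thesis
  proof (cases "applicable \<alpha> y")
    case True
    then have "\<alpha> \<in> app R y" and "apply_rxn \<alpha> y \<in> S"
      using y \<open>\<alpha> \<in> R\<close> unfolding app_def by auto
    with \<open>y \<in> S\<close> show ?thesis
      by blast
  next
    case False
    with \<open>y \<in> S\<close> show ?thesis
      using is_scc_step_within[OF assms(1-4) \<open>y \<in> S\<close>] by blast
  qed
qed

lemma weakly_fair_execution_near_scc:
  fixes R :: "('s::finite) reaction set"
  assumes "crn_protocol R" and "norm1 c0 \<ge> 1" and scc: "is_scc R c0 S"
    and no_escape: "\<not> (\<exists>\<alpha>\<in>R. escapes \<alpha> S)"
  shows "\<exists>c a. is_execution R c a \<and> weakly_fair R c a \<and> c 0 = c0 \<and> (\<forall>t. \<exists>y\<in>S. reach R (c t) y)"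
proof -
  have "finite R" and "R \<noteq> {}"
    using assms(1) app_nonempty[OF assms(1,2)] unfolding crn_protocol_def app_def by auto
  obtain e :: "nat \<Rightarrow> 's reaction" where e: "range e \<subseteq> R" and e_often: "\<forall>\<alpha>\<in>R. \<forall>N. \<exists>n\<ge>N. e n = \<alpha>"
    using cyclic_enumeration[OF \<open>finite R\<close> \<open>R \<noteq> {}\<close>] .
  define tries where "tries n y \<beta> \<longleftrightarrow> \<beta> \<in> app R y \<and> apply_rxn \<beta> y \<in> S \<and> (\<beta> = e n \<or> \<not> applicable (e n) y)"
    for n y \<beta>
  have "\<forall>n. \<exists>y. y \<in> S \<and> (\<exists>\<beta>. tries n y \<beta>)"
    using is_scc_fire_or_disabled[OF assms] e unfolding tries_def by blast
  then obtain w where w: "\<And>n. w n \<in> S" and "\<forall>n. \<exists>\<beta>. tries n (w n) \<beta>"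
    using choice[of "\<lambda>n y. y \<in> S \<and> (\<exists>\<beta>. tries n y \<beta>)"] by blast
  then obtain d where "\<And>n. tries n (w n) (d n)"
    using choice[of "\<lambda>n \<beta>. tries n (w n) \<beta>"] by blast
  then have d: "\<And>n. d n \<in> app R (w n)" and d_in: "\<And>n. apply_rxn (d n) (w n) \<in> S"
    and d_tries: "\<And>n. d n = e n \<or> \<not> applicable (e n) (w n)"
    unfolding tries_def by simp_all
  have "reach R c0 (w 0)" and "\<And>n. reach R (apply_rxn (d n) (w n)) (w (Suc n))"
    using scc w d_in unfolding is_scc_def by simp_all
  then obtain c a \<tau> where exec: "is_execution R c a" and "c 0 = c0" and "strict_mono \<tau>"
    and c\<tau>: "\<And>n. c (\<tau> n) = w n" and a\<tau>: "\<And>n. a (\<tau> n) = d n"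
    using execution_through_waypoints[of R c0 w d] d by blast
  have late: "t \<le> \<tau> n" if "t \<le> n" for t n
    using strict_mono_imp_increasing[OF \<open>strict_mono \<tau>\<close>, of n] that by linarith
  have "weakly_fair R c a"
    unfolding weakly_fair_def
  proof (intro allI ballI)
    fix t \<alpha> assume "\<alpha> \<in> app R (c t)"
    then obtain n where "n \<ge> t" and "e n = \<alpha>"
      using e_often unfolding app_def by blast
    then have "a (\<tau> n) = \<alpha> \<or> \<alpha> \<notin> app R (c (\<tau> n))"
      using c\<tau>[of n] a\<tau>[of n] d_tries[of n] unfolding app_def by auto
    then show "\<exists>t'\<ge>t. a t' = \<alpha> \<or> \<alpha> \<notin> app R (c t')"
      using late[OF \<open>n \<ge> t\<close>] by blast
  qed
  moreover have "\<exists>y\<in>S. reach R (c t) y" for t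
    using execution_reach[OF exec late[of t t]] c\<tau>[of t] w[of t] by auto
  ultimately show ?thesis
    using exec \<open>c 0 = c0\<close> by blast
qed

definition fairly_inevitable :: "'s reaction set \<Rightarrow> 's cfg \<Rightarrow> 's cfg set \<Rightarrow> bool" where
  "fairly_inevitable R c0 P \<longleftrightarrow>
     (\<forall>c a. is_execution R c a \<and> weakly_fair R c a \<and> c 0 = c0 \<longrightarrow> (\<exists>t. c t \<in> P))"

lemma fairly_inevitable_iff_scc:
  fixes R :: "('s::finite) reaction set"
  assumes "crn_protocol R" and "finite_density R" and "norm1 c0 \<ge> 1"
    and closed: "\<And>x y. x \<in> P \<Longrightarrow> reach R x y \<Longrightarrow> y \<in> P"
  shows "fairly_inevitable R c0 P \<longleftrightarrow> (\<forall>S. is_scc R c0 S \<longrightarrow> (\<exists>\<alpha>\<in>R. escapes \<alpha> S) \<or> S \<subseteq> P)"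
proof
  assume inevitable: "fairly_inevitable R c0 P"
  show "\<forall>S. is_scc R c0 S \<longrightarrow> (\<exists>\<alpha>\<in>R. escapes \<alpha> S) \<or> S \<subseteq> P"
  unfolding disj_imp
  proof (intro allI impI subsetI)
    fix S x assume scc: "is_scc R c0 S" and no_escape: "\<not> (\<exists>\<alpha>\<in>R. escapes \<alpha> S)" and "x \<in> S"
    obtain c a where "is_execution R c a" "weakly_fair R c a" "c 0 = c0"
      and near: "\<forall>t. \<exists>y\<in>S. reach R (c t) y"
      using weakly_fair_execution_near_scc[OF assms(1,3) scc no_escape] by blast
    then obtain t where "c t \<in> P"
      using inevitable unfolding fairly_inevitable_def by blast
    moreover obtain y where "y \<in> S" "reach R (c t) y"
      using near by blast
    moreover have "reach R y x"
      using scc \<open>y \<in> S\<close> \<open>x \<in> S\<close> unfolding is_scc_def by blast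
    ultimately show "x \<in> P"
      using closed reach_trans by blast
  qed
next
  assume scc_cond: "\<forall>S. is_scc R c0 S \<longrightarrow> (\<exists>\<alpha>\<in>R. escapes \<alpha> S) \<or> S \<subseteq> P"
  show "fairly_inevitable R c0 P"
    unfolding fairly_inevitable_def
  proof (intro allI impI)
    fix c a assume "is_execution R c a \<and> weakly_fair R c a \<and> c 0 = c0"
    then show "\<exists>t. c t \<in> P"
      using weakly_fair_execution_enters[OF assms(2), of c a P] scc_cond by auto
  qed
qed

lemma stab_reach_closed: "x \<in> stab R Z \<Longrightarrow> reach R x y \<Longrightarrow> y \<in> stab R Z"
  unfolding stab_def using reach_trans by blast

lemma halt_reach_closed: "x \<in> halt R Z \<Longrightarrow> reach R x y \<Longrightarrow> y \<in> halt R Z"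
  unfolding halt_def by auto

lemma stably_correct_iff_fairly_inevitable:
  "stably_correct R \<mu> C \<longleftrightarrow> (\<forall>c0. valid_init \<mu> C c0 \<longrightarrow> fairly_inevitable R c0 (stab R (Zset \<mu> C c0)))"
  unfolding stably_correct_def fairly_inevitable_def by auto

lemma haltingly_correct_iff_fairly_inevitable:
  "haltingly_correct R \<mu> C \<longleftrightarrow> (\<forall>c0. valid_init \<mu> C c0 \<longrightarrow> fairly_inevitable R c0 (halt R (Zset \<mu> C c0)))"
  unfolding haltingly_correct_def fairly_inevitable_def by auto

theorem lemma3p2:
  fixes R :: "('s::finite) reaction set"
    and \<mu> :: "'s \<Rightarrow> 'u"
    and C :: "(('u \<Rightarrow> nat) \<times> ('u \<Rightarrow> nat)) set"
  assumes "crn_protocol R"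
    and "finite_density R"
  shows "(stably_correct R \<mu> C \<longleftrightarrow>
           (\<forall>c0. valid_init \<mu> C c0 \<longrightarrow>
              (\<forall>S. is_scc R c0 S \<longrightarrow>
                 (\<exists>\<alpha>\<in>R. escapes \<alpha> S) \<or> S \<subseteq> stab R (Zset \<mu> C c0))))
       \<and> (haltingly_correct R \<mu> C \<longleftrightarrow>
           (\<forall>c0. valid_init \<mu> C c0 \<longrightarrow>
              (\<forall>S. is_scc R c0 S \<longrightarrow>
                 (\<exists>\<alpha>\<in>R. escapes \<alpha> S) \<or> S \<subseteq> halt R (Zset \<mu> C c0))))"
proof -
  have stab: "fairly_inevitable R c0 (stab R (Zset \<mu> C c0)) \<longleftrightarrow>
      (\<forall>S. is_scc R c0 S \<longrightarrow> (\<exists>\<alpha>\<in>R. escapes \<alpha> S) \<or> S \<subseteq> stab R (Zset \<mu> C c0))"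
    if "valid_init \<mu> C c0" for c0
    using fairly_inevitable_iff_scc[OF assms _ stab_reach_closed] that
    unfolding valid_init_def by simp
  have halt: "fairly_inevitable R c0 (halt R (Zset \<mu> C c0)) \<longleftrightarrow>
      (\<forall>S. is_scc R c0 S \<longrightarrow> (\<exists>\<alpha>\<in>R. escapes \<alpha> S) \<or> S \<subseteq> halt R (Zset \<mu> C c0))"
    if "valid_init \<mu> C c0" for c0
    using fairly_inevitable_iff_scc[OF assms _ halt_reach_closed] that
    unfolding valid_init_def by simp
  show ?thesis
    unfolding stably_correct_iff_fairly_inevitable haltingly_correct_iff_fairly_inevitable
    by (simp add: stab halt cong: imp_cong)
qed

end
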